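(* Suppose $s=0$. Then $(p_0^*,H^U_0)$ is a robustly optimal selling strategy, i.e., uniform information is optimal and the robust price is $p_0^*$, where $p_0^*$ and $H^U_0$ are defined in the context.
   Context: Model. A buyer's match value $x\in\{0,1\}$ has $\mathbb P(x=1)=\mu\in(0,1)$. For $m\in[0,1]$, $\mathcal M(m)$ is the set of CDFs on $[0,1]$ with mean $m$. The seller chooses $(p,H)\in[0,1]\times\mathcal M(\mu)$ (price and distribution of the buyer's posterior; $H(w)=1$ for $w\ge1$). The outside option $v$ has CDF $G\in\mathcal M(\xi)$, $\xi\in(0,1)$, and the search cost is $s$; with $S_G(t)=\int_t^1(v-t)\,dG(v)$ let $a$ solve $S_G(a)=s$ (for $s=0$ take $a$ to be the supremum of the support of $G$, so $\min\{a,v\}=v$ a.s.). Revenue: $\Pi(p,H\mid G)=p\int_0^1[1-H(p+\min\{a,v\})]\,dG(v)$. A robustly optimal selling strategy maximizes $\min_{G\in\mathcal M(\xi)}\Pi(p,H\mid G)$ over $[0,1]\times\mathcal M(\mu)$. With $s=0$: $\underline\mu=\frac{2-\xi-\sqrt{2\xi-\xi^2}}{2(1-\xi)}$, $\bar\mu=1-\frac{\sqrt\xi}{2}$; $p_0^*=\frac{1-\sqrt{2\xi-\xi^2}}{1-\xi}$ if $\mu\le\underline\mu$, $p_0^*=2\mu-1$ if $\underline\mu<\mu\le\bar\mu$, $p_0^*=1-\sqrt\xi$ if $\mu>\bar\mu$. $H^U_0$ is the uniform CDF on $[2\mu-1,1]$ if $\mu>\bar\mu$, and otherwise $H^U_0(w)=1-\frac{2\mu}{1+p_0^*}$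 for $w\in[0,p_0^* )$, $H^U_0(w)=1-\frac{2\mu}{1-(p_0^* )^2}(1-w)$ for $w\in[p_0^*,1]$. *)

theory Defs
  imports "HOL-Analysis.Analysis"
begin

definition cdf01 :: "(real \<Rightarrow> real) \<Rightarrow> bool" where
  "cdf01 F \<longleftrightarrow> mono F \<and> (\<forall>x. continuous (at_right x) F)
      \<and> (\<forall>w<0. F w = 0) \<and> (\<forall>w\<ge>1. F w = 1)"

definition CDFs_mean :: "real \<Rightarrow> (real \<Rightarrow> real) set" where
  "CDFs_mean m = {F. cdf01 F \<and> (\<integral>x. x \<partial>(interval_measure F)) = m}"

text \<open>Revenue with search cost s = 0, where min(a,v) = v almost surely.\<close>
definition revenue0 :: "real \<Rightarrow> (real \<Rightarrow> real) \<Rightarrow> (real \<Rightarrow> real) \<Rightarrow> real" where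
  "revenue0 p H G = p * (\<integral>v. (1 - H (p + v)) \<partial>(interval_measure G))"

definition worst_revenue0 :: "real \<Rightarrow> real \<Rightarrow> (real \<Rightarrow> real) \<Rightarrow> real" where
  "worst_revenue0 xi p H = (INF G \<in> CDFs_mean xi. revenue0 p H G)"

definition robustly_optimal0 :: "real \<Rightarrow> real \<Rightarrow> real \<Rightarrow> (real \<Rightarrow> real) \<Rightarrow> bool" where
  "robustly_optimal0 mu xi p H \<longleftrightarrow>
     p \<in> {0..1} \<and> H \<in> CDFs_mean mu \<and>
     (\<forall>p'\<in>{0..1}. \<forall>H'\<in>CDFs_mean mu. worst_revenue0 xi p' H' \<le> worst_revenue0 xi p H)"

definition mu_low :: "real \<Rightarrow> real" where
  "mu_low xi = (2 - xi - sqrt (2*xi - xi^2)) / (2 * (1 - xi))"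

definition mu_high :: "real \<Rightarrow> real" where
  "mu_high xi = 1 - sqrt xi / 2"

definition p0_star :: "real \<Rightarrow> real \<Rightarrow> real" where
  "p0_star mu xi =
     (if mu \<le> mu_low xi then (1 - sqrt (2*xi - xi^2)) / (1 - xi)
      else if mu \<le> mu_high xi then 2*mu - 1
      else 1 - sqrt xi)"

definition HU0 :: "real \<Rightarrow> real \<Rightarrow> real \<Rightarrow> real" where
  "HU0 mu xi w =
     (if mu > mu_high xi then
        (if w < 2*mu - 1 then 0 else if w \<ge> 1 then 1
         else (w - (2*mu - 1)) / (1 - (2*mu - 1)))
      else
        (let p = p0_star mu xi in
         if w < 0 then 0
         else if w < p then 1 - 2*mu / (1 + p)
         else if w \<le> 1 then 1 - 2*mu / (1 - p^2) * (1 - w)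
         else 1))"

end

theory Submission
  imports Defs "HOL-Probability.Probability"
begin

text \<open>Upper bounds come from outside options chosen by nature against an arbitrary strategy
  (p, H). If the outside option is 0 or 1 - p, the buyer with the high option never buys, so
  the revenue is at most p (1 - xi / (1 - p)). If the outside option has density b on [0, L]
  above an atom b p at 0, a buyer with posterior w buys with probability at most b w, and since
  this is linear in w the revenue is at most p b mu for every H of mean mu. Tuning b and L
  bounds every guarantee by mu * rev_rate xi q for some q \<ge> p; together with the
  two-point bound this yields mu (1 - sqrt (2 xi - xi^2)), mu * rev_rate xi p0* and
  (1 - sqrt xi)^2 in the three regimes of mu.

  The lower bound comes from the shape of H^U_0: w \<mapsto> 1 - H^U_0 (p0* + w) dominates an affine
  function on [0, 1], so the revenue against any outside option depends on it only through its
  mean xi, and at the price p0* it equals the upper bound.\<close>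

section \<open>Distributions on the unit interval\<close>

lemma cdf01_mono: "cdf01 F \<Longrightarrow> x \<le> y \<Longrightarrow> F x \<le> F y"
  unfolding cdf01_def by (auto dest: monoD)

lemma cdf01_nonneg:
  assumes "cdf01 F" shows "0 \<le> F x"
proof -
  have "F (min x (-1)) \<le> F x" by (rule cdf01_mono[OF assms]) simp
  moreover have "F (min x (-1)) = 0" using assms unfolding cdf01_def by simp
  ultimately show ?thesis by simp
qed

lemma cdf01_le_1:
  assumes "cdf01 F" shows "F x \<le> 1"
proof -
  have "F x \<le> F (max x 1)" by (rule cdf01_mono[OF assms]) simp
  moreover have "F (max x 1) = 1" using assms unfolding cdf01_def by simp
  ultimately show ?thesis by simp
qed

lemma
  assumes "cdf01 F"
  shows real_distribution_interval_measure_cdf01: "real_distribution (interval_measure F)"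
    and cdf_interval_measure_cdf01: "cdf (interval_measure F) = F"
proof -
  have mono: "\<And>x y. x \<le> y \<Longrightarrow> F x \<le> F y" using cdf01_mono[OF assms] .
  have right_cont: "\<And>a. continuous (at_right a) F" using assms unfolding cdf01_def by auto
  have "eventually (\<lambda>x. F x = 0) at_bot"
    unfolding eventually_at_bot_linorder using assms unfolding cdf01_def by (intro exI[of _ "-1"]) auto
  then have bot: "(F \<longlongrightarrow> 0) at_bot" by (rule tendsto_eventually)
  have "eventually (\<lambda>x. F x = 1) at_top"
    unfolding eventually_at_top_linorder using assms unfolding cdf01_def by (intro exI[of _ 1]) auto
  then have top: "(F \<longlongrightarrow> 1) at_top" by (rule tendsto_eventually)
  show "real_distribution (interval_measure F)"
    by (rule real_distribution_interval_measure[OF mono right_cont bot top])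
  show "cdf (interval_measure F) = F"
    by (rule cdf_interval_measure[OF mono right_cont bot])
qed

lemma interval_measure_cdf:
  assumes "real_distribution M"
  shows "interval_measure (cdf M) = M"
proof -
  interpret real_distribution M by fact
  have "real_distribution (interval_measure (cdf M))"
    by (rule real_distribution_interval_measure[OF cdf_nondecreasing cdf_is_right_cont
          cdf_lim_at_bot cdf_lim_at_top_prob])
  moreover have "cdf (interval_measure (cdf M)) = cdf M"
    by (rule cdf_interval_measure[OF cdf_nondecreasing cdf_is_right_cont cdf_lim_at_bot])
  ultimately show ?thesis using assms by (simp add: cdf_unique)
qed

lemma cdf01_cdf:
  assumes "real_distribution M" "\<And>x. x < 0 \<Longrightarrow> cdf M x = 0" "\<And>x. 1 \<le> x \<Longrightarrow> cdf M x = 1"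
  shows "cdf01 (cdf M)"
proof -
  interpret real_distribution M by fact
  show ?thesis
    unfolding cdf01_def using cdf_nondecreasing cdf_is_right_cont assms by (auto intro: monoI)
qed

lemma measure_interval_measure_greaterThan:
  assumes "cdf01 F"
  shows "measure (interval_measure F) {t<..} = 1 - F t"
proof -
  interpret real_distribution "interval_measure F"
    by (rule real_distribution_interval_measure_cdf01[OF assms])
  have "measure (interval_measure F) {t<..} = 1 - measure (interval_measure F) {..t}"
    using prob_compl[of "{..t}"] by (simp add: Compl_eq_Diff_UNIV[symmetric])
  also have "measure (interval_measure F) {..t} = F t"
    using cdf_interval_measure_cdf01[OF assms] by (simp add: cdf_def2[symmetric])
  finally show ?thesis .
qed

lemma AE_interval_measure_cdf01:
  assumes "cdf01 F"
  shows "AE x in interval_measure F. 0 \<le> x \<and> x \<le> 1"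
proof -
  let ?M = "interval_measure F"
  interpret real_distribution ?M by (rule real_distribution_interval_measure_cdf01[OF assms])
  have cdf_M: "cdf ?M = F" by (rule cdf_interval_measure_cdf01[OF assms])
  have "eventually (\<lambda>x. cdf ?M x = 0) (at_left (0::real))"
    unfolding cdf_M eventually_at_left_field using assms unfolding cdf01_def
    by (intro exI[of _ "-1"]) auto
  then have "(cdf ?M \<longlongrightarrow> 0) (at_left 0)" by (rule tendsto_eventually)
  then have below: "measure ?M {..<0} = 0"
    using cdf_at_left tendsto_unique trivial_limit_at_left_real by blast
  have above: "measure ?M {1<..} = 0"
    using measure_interval_measure_greaterThan[OF assms, of 1] assms unfolding cdf01_def by simp
  have "measure ?M ({..<0} \<union> {1<..}) = 0"
    using measure_Un_le[of "{..<0}" ?M "{1<..}"] below above by (simp add: antisym)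
  then show ?thesis
    by (intro AE_I[of _ _ "{..<0} \<union> {1<..}"]) (auto simp: emeasure_eq_measure)
qed

lemma integrable_interval_measure_cdf01:
  assumes "cdf01 F"
  shows "integrable (interval_measure F) (\<lambda>x. x)"
proof -
  interpret real_distribution "interval_measure F"
    by (rule real_distribution_interval_measure_cdf01[OF assms])
  show ?thesis
    by (rule integrable_const_bound[of _ 1]) (use AE_interval_measure_cdf01[OF assms] in auto)
qed

lemma borel_measurable_cdf01_shift:
  assumes "cdf01 H"
  shows "(\<lambda>v. 1 - H (p + v)) \<in> borel_measurable borel"
proof -
  have "mono (\<lambda>v. H (p + v))" using cdf01_mono[OF assms] by (auto intro!: monoI)
  then have "(\<lambda>v. H (p + v)) \<in> borel_measurable borel" by (rule borel_measurable_mono)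
  then show ?thesis by measurable
qed

lemma revenue0_nonneg:
  assumes "cdf01 H" "0 \<le> p"
  shows "0 \<le> revenue0 p H G"
  unfolding revenue0_def using assms cdf01_le_1[OF assms(1)]
  by (intro mult_nonneg_nonneg integral_nonneg) auto

lemma worst_revenue0_le_revenue0:
  assumes "cdf01 H" "0 \<le> p" "G \<in> CDFs_mean xi"
  shows "worst_revenue0 xi p H \<le> revenue0 p H G"
  unfolding worst_revenue0_def
  by (rule cINF_lower[OF _ assms(3)]) (auto intro!: bdd_belowI[of _ 0] revenue0_nonneg assms)

section \<open>Finitely supported outside options\<close>

definition prob_weights :: "nat \<Rightarrow> (nat \<Rightarrow> real) \<Rightarrow> bool" where
  "prob_weights N m \<longleftrightarrow> (\<forall>i<N. 0 \<le> m i) \<and> (\<Sum>i<N. m i) = 1"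

definition discrete_dist :: "nat \<Rightarrow> (nat \<Rightarrow> real) \<Rightarrow> (nat \<Rightarrow> real) \<Rightarrow> real measure" where
  "discrete_dist N m v = distr (measure_pmf (embed_pmf (\<lambda>i. if i < N then m i else 0))) borel v"

lemma pmf_embed_prob_weights:
  assumes "prob_weights N m"
  shows "pmf (embed_pmf (\<lambda>i. if i < N then m i else 0)) i = (if i < N then m i else 0)"
proof (rule pmf_embed_pmf)
  let ?f = "\<lambda>i. if i < N then m i else 0"
  show "\<And>i. 0 \<le> ?f i" using assms unfolding prob_weights_def by auto
  have "(\<integral>\<^sup>+i. ennreal (?f i) \<partial>count_space UNIV) = (\<Sum>i<N. ennreal (?f i))"
    by (rule nn_integral_count_space') auto
  also have "\<dots> = ennreal (\<Sum>i<N. m i)"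
    using assms unfolding prob_weights_def by (subst sum_ennreal) auto
  finally show "(\<integral>\<^sup>+i. ennreal (?f i) \<partial>count_space UNIV) = 1"
    using assms unfolding prob_weights_def by simp
qed

lemma real_distribution_discrete_dist: "real_distribution (discrete_dist N m v)"
  unfolding discrete_dist_def
  by (rule prob_space.real_distribution_distr[OF prob_space_measure_pmf]) auto

lemma integral_discrete_dist:
  assumes "prob_weights N m" and [measurable]: "f \<in> borel_measurable borel"
  shows "(\<integral>x. f x \<partial>discrete_dist N m v) = (\<Sum>i<N. m i * f (v i))"
proof -
  let ?p = "embed_pmf (\<lambda>i. if i < N then m i else 0)"
  have "(\<integral>x. f x \<partial>discrete_dist N m v) = (\<integral>i. f (v i) \<partial>measure_pmf ?p)"
    unfolding discrete_dist_def by (rule integral_distr) auto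
  also have "\<dots> = (\<Sum>i<N. f (v i) * pmf ?p i)"
    by (rule integral_measure_pmf_real)
       (auto simp: pmf_embed_prob_weights[OF assms(1)] set_pmf_eq split: if_splits)
  also have "\<dots> = (\<Sum>i<N. m i * f (v i))"
    by (rule sum.cong) (auto simp: pmf_embed_prob_weights[OF assms(1)])
  finally show ?thesis .
qed

lemma integral_interval_measure_cdf_discrete_dist:
  assumes "prob_weights N m" "f \<in> borel_measurable borel"
  shows "(\<integral>x. f x \<partial>interval_measure (cdf (discrete_dist N m v))) = (\<Sum>i<N. m i * f (v i))"
  unfolding interval_measure_cdf[OF real_distribution_discrete_dist]
  by (rule integral_discrete_dist[OF assms])

lemma cdf_discrete_dist_in_CDFs_mean:
  assumes m: "prob_weights N m" and v: "\<And>i. i < N \<Longrightarrow> 0 \<le> v i \<and> v i \<le> 1"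
    and mean: "(\<Sum>i<N. m i * v i) = xi"
  shows "cdf (discrete_dist N m v) \<in> CDFs_mean xi"
proof -
  interpret real_distribution "discrete_dist N m v" by (rule real_distribution_discrete_dist)
  have cdf_eq: "cdf (discrete_dist N m v) x = (\<Sum>i<N. m i * indicator {..x} (v i))" for x
  proof -
    have "cdf (discrete_dist N m v) x = (\<integral>y. indicator {..x} y \<partial>discrete_dist N m v)"
      unfolding cdf_def by simp
    also have "\<dots> = (\<Sum>i<N. m i * indicator {..x} (v i))"
      by (rule integral_discrete_dist[OF m]) auto
    finally show ?thesis .
  qed
  have "cdf01 (cdf (discrete_dist N m v))"
  proof (rule cdf01_cdf[OF real_distribution_discrete_dist])
    fix x :: real assume "x < 0"
    then show "cdf (discrete_dist N m v) x = 0"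
      using v unfolding cdf_eq by (force intro!: sum.neutral simp: indicator_def)
  next
    fix x :: real assume "1 \<le> x"
    then have "(\<Sum>i<N. m i * indicator {..x} (v i)) = (\<Sum>i<N. m i)"
      using v by (force intro!: sum.cong simp: indicator_def)
    then show "cdf (discrete_dist N m v) x = 1"
      using m unfolding cdf_eq prob_weights_def by simp
  qed
  then show ?thesis
    unfolding CDFs_mean_def using integral_interval_measure_cdf_discrete_dist[OF m, of "\<lambda>x. x"] mean
    by simp
qed

lemma point_mass_in_CDFs_mean:
  assumes "0 \<le> xi" "xi \<le> 1"
  shows "cdf (discrete_dist 1 (\<lambda>_. 1) (\<lambda>_. xi)) \<in> CDFs_mean xi"
  by (rule cdf_discrete_dist_in_CDFs_mean) (use assms in \<open>auto simp: prob_weights_def\<close>)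

lemma revenue0_discrete_dist:
  assumes "cdf01 H" "prob_weights N m"
  shows "revenue0 p H (cdf (discrete_dist N m a)) = p * (\<Sum>i<N. m i * (1 - H (p + a i)))"
  unfolding revenue0_def
  by (subst integral_interval_measure_cdf_discrete_dist[OF assms(2) borel_measurable_cdf01_shift[OF assms(1)]])
     (rule refl)

lemma worst_revenue0_nonpos:
  assumes H: "H \<in> CDFs_mean mu" and "0 \<le> p" "0 \<le> xi" "xi \<le> 1" "1 \<le> p + xi"
  shows "worst_revenue0 xi p H \<le> 0"
proof -
  have H01: "cdf01 H" using H unfolding CDFs_mean_def by auto
  have "worst_revenue0 xi p H \<le> revenue0 p H (cdf (discrete_dist 1 (\<lambda>_. 1) (\<lambda>_. xi)))"
    by (rule worst_revenue0_le_revenue0[OF H01 \<open>0 \<le> p\<close> point_mass_in_CDFs_mean]) (use assms in auto)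
  also have "\<dots> = p * (1 - H (p + xi))"
    by (subst revenue0_discrete_dist[OF H01]) (auto simp: prob_weights_def)
  also have "H (p + xi) = 1" using H01 assms unfolding cdf01_def by auto
  finally show ?thesis by simp
qed

lemma worst_revenue0_le_two_point:
  assumes H: "H \<in> CDFs_mean mu" and p: "0 \<le> p" "p < 1" and xi: "0 \<le> xi" "p + xi \<le> 1"
  shows "worst_revenue0 xi p H \<le> p * (1 - xi / (1 - p))"
proof -
  have H01: "cdf01 H" using H unfolding CDFs_mean_def by auto
  define l where "l = xi / (1 - p)"
  have l: "0 \<le> l" "l \<le> 1" "l * (1 - p) = xi" using p xi unfolding l_def by (auto simp: field_simps)
  let ?m = "\<lambda>i::nat. if i = 0 then 1 - l else l"
  let ?a = "\<lambda>i::nat. if i = 0 then 0 else 1 - p"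
  have m: "prob_weights 2 ?m" using l by (auto simp: prob_weights_def numeral_2_eq_2)
  have G: "cdf (discrete_dist 2 ?m ?a) \<in> CDFs_mean xi"
    by (rule cdf_discrete_dist_in_CDFs_mean[OF m]) (use l p in \<open>auto simp: numeral_2_eq_2\<close>)
  have "worst_revenue0 xi p H \<le> revenue0 p H (cdf (discrete_dist 2 ?m ?a))"
    by (rule worst_revenue0_le_revenue0[OF H01 p(1) G])
  also have "\<dots> = p * ((1 - l) * (1 - H p) + l * (1 - H 1))"
    by (subst revenue0_discrete_dist[OF H01 m]) (simp add: numeral_2_eq_2)
  also have "H 1 = 1" using H01 unfolding cdf01_def by auto
  also have "p * ((1 - l) * (1 - H p) + l * (1 - 1)) \<le> p * (1 - l)"
    using p l cdf01_nonneg[OF H01, of p] by (simp add: mult_left_mono mult_left_le)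
  finally show ?thesis unfolding l_def .
qed

lemma revenue0_discrete_dist_le:
  assumes H: "H \<in> CDFs_mean mu" and m: "prob_weights N m"
    and below: "\<And>w. 0 \<le> w \<Longrightarrow> w \<le> 1 \<Longrightarrow> (\<Sum>i<N. m i * indicator {p + a i<..} w) \<le> b * w + e"
    and "0 \<le> p"
  shows "revenue0 p H (cdf (discrete_dist N m a)) \<le> p * (b * mu + e)"
proof -
  have H01: "cdf01 H" and mean: "(\<integral>x. x \<partial>interval_measure H) = mu"
    using H unfolding CDFs_mean_def by auto
  let ?M = "interval_measure H"
  interpret real_distribution ?M by (rule real_distribution_interval_measure_cdf01[OF H01])
  have ind: "\<And>t. integrable ?M (indicator {t<..} :: real \<Rightarrow> real)"
    by (rule integrable_real_indicator) (auto simp: emeasure_eq_measure)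
  have "(\<Sum>i<N. m i * (1 - H (p + a i))) = (\<Sum>i<N. m i * measure ?M {p + a i<..})"
    using measure_interval_measure_greaterThan[OF H01] by simp
  also have "\<dots> = (\<integral>w. (\<Sum>i<N. m i * indicator {p + a i<..} w) \<partial>?M)"
    using ind by (subst Bochner_Integration.integral_sum) auto
  also have "\<dots> \<le> (\<integral>w. b * w + e \<partial>?M)"
  proof (rule integral_mono_AE)
    show "integrable ?M (\<lambda>w. \<Sum>i<N. m i * indicator {p + a i<..} w)"
      by (intro Bochner_Integration.integrable_sum integrable_mult_right ind)
    show "integrable ?M (\<lambda>w. b * w + e)"
      using integrable_interval_measure_cdf01[OF H01] by auto
    show "AE w in ?M. (\<Sum>i<N. m i * indicator {p + a i<..} w) \<le> b * w + e"
      using AE_interval_measure_cdf01[OF H01] by eventually_elim (use below in auto)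
  qed
  also have "\<dots> = b * mu + e"
    using integrable_interval_measure_cdf01[OF H01] mean prob_space by simp
  finally show ?thesis
    unfolding revenue0_discrete_dist[OF H01 m] using \<open>0 \<le> p\<close> by (rule mult_left_mono)
qed

lemma card_midpoints_less_le:
  fixes y h :: real
  assumes "0 < h" "0 \<le> y"
  shows "real (card {i\<in>{..<n}. (real i + 1/2) * h < y}) \<le> y / h + 1"
proof -
  have "{i\<in>{..<n}. (real i + 1/2) * h < y} \<subseteq> {..<nat \<lceil>y / h\<rceil>}"
  proof
    fix i assume "i \<in> {i\<in>{..<n}. (real i + 1/2) * h < y}"
    then have "real i * h < y" using assms by (simp add: algebra_simps)
    then have "real i < y / h" using assms by (simp add: pos_less_divide_eq)
    then have "real i < \<lceil>y / h\<rceil>" by (meson le_of_int_ceiling less_le_trans)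
    then have "int i < \<lceil>y / h\<rceil>" by (metis of_int_less_iff of_int_of_nat_eq)
    then show "i \<in> {..<nat \<lceil>y / h\<rceil>}" by (simp add: zless_nat_eq_int_zless)
  qed
  then have "card {i\<in>{..<n}. (real i + 1/2) * h < y} \<le> nat \<lceil>y / h\<rceil>"
    using card_mono[of "{..<nat \<lceil>y / h\<rceil>}"] by simp
  then have "real (card {i\<in>{..<n}. (real i + 1/2) * h < y}) \<le> real (nat \<lceil>y / h\<rceil>)"
    by linarith
  also have "\<dots> \<le> y / h + 1"
    using assms ceiling_correct[of "y / h"] by (simp add: of_nat_nat)
  finally show ?thesis .
qed

lemma sum_midpoint_indicators_le:
  fixes c h y :: real
  assumes "0 < h" "0 \<le> c"
  shows "(\<Sum>i<n. c * h * indicator {(real i + 1/2) * h<..} y) \<le> c * max y 0 + c * h"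
proof (cases "0 \<le> y")
  case True
  have "(\<Sum>i<n. c * h * indicator {(real i + 1/2) * h<..} y)
      = (\<Sum>i<n. if (real i + 1/2) * h < y then c * h else 0)"
    by (rule sum.cong) (auto simp: indicator_def)
  also have "\<dots> = (\<Sum>i\<in>{i\<in>{..<n}. (real i + 1/2) * h < y}. c * h)"
    by (rule sum.inter_filter[symmetric]) simp
  also have "\<dots> = c * h * real (card {i\<in>{..<n}. (real i + 1/2) * h < y})" by simp
  also have "\<dots> \<le> c * h * (y / h + 1)"
    using assms True by (intro mult_left_mono card_midpoints_less_le) auto
  also have "\<dots> = c * y + c * h" using assms by (simp add: field_simps)
  finally show ?thesis using True by simp
next
  case False
  have "0 \<le> (real i + 1/2) * h" for i using assms by simp
  then have "indicator {(real i + 1/2) * h<..} y = (0::real)" for i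
    using False by (simp add: indicator_def not_less order.trans[of y 0])
  then show ?thesis using assms by simp
qed

text \<open>An outside-option distribution with density b on [0, L], an atom b p at 0 and the remaining
  mass at L, discretised into n midpoint atoms on [0, L]. Against it, a buyer whose posterior is w
  buys at price p with probability at most about b w, so the revenue is at most about p b mu.\<close>

definition slope_atoms :: "nat \<Rightarrow> real \<Rightarrow> nat \<Rightarrow> real" where
  "slope_atoms n L i = (if i < n then (real i + 1/2) * (L / n) else if i = n then 0 else L)"

definition slope_weights :: "nat \<Rightarrow> real \<Rightarrow> real \<Rightarrow> real \<Rightarrow> nat \<Rightarrow> real" where
  "slope_weights n b p L i = (if i < n then b * (L / n) else if i = n then b * p else 1 - b * (p + L))"

lemma prob_weights_slope_weights:
  assumes "0 < n" "0 \<le> b" "0 \<le> p" "0 \<le> L" "b * (p + L) \<le> 1"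
  shows "prob_weights (Suc (Suc n)) (slope_weights n b p L)"
proof -
  have "(\<Sum>i<n. slope_weights n b p L i) = b * L"
    using assms(1) by (simp add: slope_weights_def)
  then show ?thesis
    using assms by (auto simp: prob_weights_def slope_weights_def algebra_simps)
qed

lemma slope_atoms_bounds:
  assumes "0 \<le> L"
  shows "0 \<le> slope_atoms n L i \<and> slope_atoms n L i \<le> L"
proof (cases "i < n")
  case True
  then have "(real i + 1/2) * (L / n) \<le> real n * (L / n)"
    using assms by (intro mult_right_mono) auto
  then show ?thesis using True assms by (simp add: slope_atoms_def)
qed (use assms in \<open>auto simp: slope_atoms_def\<close>)

lemma sum_midpoints: "(\<Sum>i<n. real i + 1/2) = real n ^ 2 / 2"
  by (induction n) (auto simp: field_simps power2_eq_square)

lemma slope_dist_mean: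
  assumes "0 < n"
  shows "(\<Sum>i<Suc (Suc n). slope_weights n b p L i * slope_atoms n L i)
           = b * L^2 / 2 + (1 - b * (p + L)) * L"
proof -
  have "(\<Sum>i<n. slope_weights n b p L i * slope_atoms n L i) = (b * L^2 / real n ^ 2) * (\<Sum>i<n. real i + 1/2)"
    unfolding sum_distrib_left
    by (rule sum.cong) (simp_all add: slope_weights_def slope_atoms_def power2_eq_square)
  also have "\<dots> = b * L^2 / 2" using assms by (simp add: sum_midpoints)
  finally show ?thesis by (simp add: slope_weights_def slope_atoms_def)
qed

lemma slope_dist_buy_prob_le:
  assumes "0 < n" "0 \<le> b" "0 \<le> p" "0 < L" "b * (p + L) = 1 \<or> p + L = 1" "0 \<le> w" "w \<le> 1"
  shows "(\<Sum>i<Suc (Suc n). slope_weights n b p L i * indicator {p + slope_atoms n L i<..} w)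
           \<le> b * w + b * (L / n)"
proof -
  let ?f = "\<lambda>i. slope_weights n b p L i * indicator {p + slope_atoms n L i<..} w"
  have shift: "indicator {p + t<..} w = indicator {t<..} (w - p)" for t :: real
    by (simp add: indicator_def)
  have "(\<Sum>i<n. ?f i) = (\<Sum>i<n. b * (L / n) * indicator {(real i + 1/2) * (L / n)<..} (w - p))"
    by (simp add: slope_weights_def slope_atoms_def shift)
  also have "\<dots> \<le> b * max (w - p) 0 + b * (L / n)"
    using assms by (intro sum_midpoint_indicators_le) auto
  finally have midpoints: "(\<Sum>i<n. ?f i) \<le> b * max (w - p) 0 + b * (L / n)" .
  have "?f n = b * p * indicator {p<..} w" "?f (Suc n) = 0"
    using assms by (auto simp: slope_weights_def slope_atoms_def indicator_def)
  then have "(\<Sum>i<Suc (Suc n). ?f i) = (\<Sum>i<n. ?f i) + b * p * indicator {p<..} w"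
    by simp
  also have "\<dots> \<le> b * max (w - p) 0 + b * p * indicator {p<..} w + b * (L / n)"
    using midpoints by simp
  also have "b * max (w - p) 0 + b * p * indicator {p<..} w \<le> b * w"
    using assms by (cases "p < w") (auto simp: indicator_def algebra_simps)
  finally show ?thesis by simp
qed

lemma worst_revenue0_le_slope:
  assumes H: "H \<in> CDFs_mean mu" and p: "0 \<le> p" and L: "0 < L" "p + L \<le> 1"
    and b: "0 \<le> b" "b * (p + L) \<le> 1" "b * (p + L) = 1 \<or> p + L = 1"
    and mean: "b * L^2 / 2 + (1 - b * (p + L)) * L = xi"
  shows "worst_revenue0 xi p H \<le> p * b * mu"
proof -
  have H01: "cdf01 H" using H unfolding CDFs_mean_def by auto
  have approx: "worst_revenue0 xi p H \<le> p * (b * mu + b * (L / n))" if "0 < n" for n :: nat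
  proof -
    let ?G = "cdf (discrete_dist (Suc (Suc n)) (slope_weights n b p L) (slope_atoms n L))"
    have weights: "prob_weights (Suc (Suc n)) (slope_weights n b p L)"
      using prob_weights_slope_weights \<open>0 < n\<close> b p L by simp
    have "?G \<in> CDFs_mean xi"
    proof (rule cdf_discrete_dist_in_CDFs_mean[OF weights])
      show "0 \<le> slope_atoms n L i \<and> slope_atoms n L i \<le> 1" for i
        using slope_atoms_bounds[of L n i] L p by linarith
      show "(\<Sum>i<Suc (Suc n). slope_weights n b p L i * slope_atoms n L i) = xi"
        using slope_dist_mean[OF \<open>0 < n\<close>] mean by simp
    qed
    then have "worst_revenue0 xi p H \<le> revenue0 p H ?G"
      by (rule worst_revenue0_le_revenue0[OF H01 p])
    also have "\<dots> \<le> p * (b * mu + b * (L / n))"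
      by (rule revenue0_discrete_dist_le[OF H weights slope_dist_buy_prob_le p])
         (use \<open>0 < n\<close> b p L in auto)
    finally show ?thesis .
  qed
  have "(\<lambda>n. p * (b * mu + b * (L / real n))) \<longlonglongrightarrow> p * (b * mu + b * 0)"
    by (intro tendsto_intros)
  moreover have "\<exists>N. \<forall>n\<ge>N. worst_revenue0 xi p H \<le> p * (b * mu + b * (L / real n))"
    using approx by (intro exI[of _ 1]) auto
  ultimately have "worst_revenue0 xi p H \<le> p * (b * mu + b * 0)" by (rule LIMSEQ_le_const)
  then show ?thesis by simp
qed

section \<open>Posteriors with an atom at 0 and a uniform part\<close>

definition unif01 :: "real measure" where
  "unif01 = density lborel (\<lambda>x. ennreal (indicator {0..1} x))"

lemma emeasure_unif01:
  assumes "A \<in> sets borel"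
  shows "emeasure unif01 A = emeasure lborel (A \<inter> {0..1})"
proof -
  have "emeasure unif01 A = (\<integral>\<^sup>+x. ennreal (indicator {0..1} x) * indicator A x \<partial>lborel)"
    unfolding unif01_def by (rule emeasure_density) (use assms in auto)
  also have "\<dots> = (\<integral>\<^sup>+x. indicator (A \<inter> {0..1}) x \<partial>lborel)"
    by (rule nn_integral_cong) (auto simp: indicator_def)
  also have "\<dots> = emeasure lborel (A \<inter> {0..1})"
    using assms by (intro nn_integral_indicator) auto
  finally show ?thesis .
qed

lemma prob_space_unif01: "prob_space unif01"
proof
  show "emeasure unif01 (space unif01) = 1"
    using emeasure_unif01[of UNIV] by (simp add: unif01_def)
qed

text \<open>Mass a at 0 and mass 1 - a spread uniformly over [c, 1]. Below mu_high, H^U_0 is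
  atom_unif_cdf (1 - 2 mu / (1 + p)) p with p = p0*; above it, H^U_0 is atom_unif_cdf 0 (2 mu - 1).\<close>

definition atom_unif_cdf :: "real \<Rightarrow> real \<Rightarrow> real \<Rightarrow> real" where
  "atom_unif_cdf a c x =
     (if x < 0 then 0 else if x < c then a else if x < 1 then a + (1 - a) * (x - c) / (1 - c) else 1)"

definition atom_unif_quantile :: "real \<Rightarrow> real \<Rightarrow> real \<Rightarrow> real" where
  "atom_unif_quantile a c u = (if u < a then 0 else c + (u - a) * (1 - c) / (1 - a))"

definition atom_unif_dist :: "real \<Rightarrow> real \<Rightarrow> real measure" where
  "atom_unif_dist a c = distr unif01 borel (atom_unif_quantile a c)"

lemma mono_atom_unif_quantile:
  assumes "0 \<le> a" "a < 1" "0 \<le> c" "c \<le> 1"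
  shows "mono (atom_unif_quantile a c)"
proof (rule monoI)
  fix u u' :: real assume "u \<le> u'"
  moreover have "0 \<le> (1 - c) / (1 - a)" using assms by simp
  ultimately have "(u - a) * (1 - c) / (1 - a) \<le> (u' - a) * (1 - c) / (1 - a)"
    by (metis diff_right_mono mult_right_mono times_divide_eq_right)
  moreover have "a \<le> u' \<Longrightarrow> 0 \<le> (u' - a) * (1 - c) / (1 - a)" using assms by simp
  ultimately show "atom_unif_quantile a c u \<le> atom_unif_quantile a c u'"
    using assms \<open>u \<le> u'\<close> unfolding atom_unif_quantile_def by auto
qed

lemma atom_unif_quantile_galois:
  assumes "0 \<le> a" "a < 1" "0 \<le> c" "c < 1" "0 \<le> u" "u \<le> 1"
  shows "u < atom_unif_cdf a c x \<Longrightarrow> atom_unif_quantile a c u \<le> x"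
    and "atom_unif_quantile a c u \<le> x \<Longrightarrow> u \<le> atom_unif_cdf a c x"
proof -
  define k where "k = (1 - c) / (1 - a)"
  have k: "0 < k" "(1 - a) * k = 1 - c" using assms unfolding k_def by auto
  have T: "atom_unif_quantile a c u = (if u < a then 0 else c + (u - a) * k)"
    unfolding atom_unif_quantile_def k_def by simp
  have F: "atom_unif_cdf a c x = (if x < 0 then 0 else if x < c then a else if x < 1 then a + (x - c) / k else 1)"
    using assms unfolding atom_unif_cdf_def k_def by simp
  have scale: "(u - a) * k \<le> x - c \<longleftrightarrow> u \<le> a + (x - c) / k"
    "(u - a) * k < x - c \<longleftrightarrow> u < a + (x - c) / k"
    using pos_le_divide_eq[OF k(1), of "u - a" "x - c"] pos_less_divide_eq[OF k(1), of "u - a" "x - c"]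
    by linarith+
  have "(u < atom_unif_cdf a c x \<longrightarrow> atom_unif_quantile a c u \<le> x)
    \<and> (atom_unif_quantile a c u \<le> x \<longrightarrow> u \<le> atom_unif_cdf a c x)"
  proof (cases "u < a")
    case True
    have "c \<le> x \<longrightarrow> 0 \<le> (x - c) / k" using k by simp
    then show ?thesis using True assms unfolding T F by auto
  next
    case False
    have "(u - a) * k \<le> (1 - a) * k" using assms k by (intro mult_right_mono) auto
    moreover have "0 \<le> (u - a) * k" using False k by simp
    ultimately have Tu: "atom_unif_quantile a c u = c + (u - a) * k" "c \<le> c + (u - a) * k"
      "c + (u - a) * k \<le> 1"
      using False k unfolding T by auto
    consider "x < c" | "c \<le> x" "x < 1" | "1 \<le> x" by linarith
    then show ?thesis
    proof cases
      case 1
      then show ?thesis using False assms Tu unfolding F by auto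
    next
      case 2
      then show ?thesis using assms Tu scale unfolding F by auto
    next
      case 3
      then show ?thesis using assms Tu unfolding F by auto
    qed
  qed
  then show "u < atom_unif_cdf a c x \<Longrightarrow> atom_unif_quantile a c u \<le> x"
    and "atom_unif_quantile a c u \<le> x \<Longrightarrow> u \<le> atom_unif_cdf a c x"
    by auto
qed

lemma atom_unif_cdf_bounds:
  assumes "0 \<le> a" "a < 1" "c < 1"
  shows "0 \<le> atom_unif_cdf a c x \<and> atom_unif_cdf a c x \<le> 1"
proof -
  have "c \<le> x \<Longrightarrow> x < 1 \<Longrightarrow> (1 - a) * (x - c) / (1 - c) \<le> 1 - a"
    using assms by (simp add: divide_le_eq mult_left_mono)
  then show ?thesis using assms by (auto simp: atom_unif_cdf_def)
qed

lemma measure_lborel_squeeze: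
  assumes "S \<in> sets borel" "{0..<y} \<subseteq> S" "S \<subseteq> {0..y}" "0 \<le> y"
  shows "measure lborel S = y"
proof -
  have "emeasure lborel {0..<y} \<le> emeasure lborel S" by (rule emeasure_mono) (use assms in auto)
  moreover have "emeasure lborel S \<le> emeasure lborel {0..y}" by (rule emeasure_mono) (use assms in auto)
  ultimately have "emeasure lborel S = ennreal y" using assms by simp
  then show ?thesis using assms by (simp add: measure_def)
qed

lemma borel_measurable_atom_unif_quantile:
  assumes "0 \<le> a" "a < 1" "0 \<le> c" "c < 1"
  shows "atom_unif_quantile a c \<in> borel_measurable borel"
  using borel_measurable_mono[OF mono_atom_unif_quantile] assms by simp

lemma real_distribution_atom_unif_dist:
  assumes "0 \<le> a" "a < 1" "0 \<le> c" "c < 1"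
  shows "real_distribution (atom_unif_dist a c)"
  unfolding atom_unif_dist_def
  by (rule prob_space.real_distribution_distr[OF prob_space_unif01])
     (use borel_measurable_atom_unif_quantile[OF assms] in \<open>simp add: unif01_def\<close>)

lemma cdf_atom_unif_dist:
  assumes "0 \<le> a" "a < 1" "0 \<le> c" "c < 1"
  shows "cdf (atom_unif_dist a c) = atom_unif_cdf a c"
proof
  fix x
  let ?T = "atom_unif_quantile a c"
  let ?S = "{u. ?T u \<le> x} \<inter> {0..1}"
  have T: "?T \<in> borel_measurable borel" by (rule borel_measurable_atom_unif_quantile[OF assms])
  have "?T -` {..x} \<in> sets borel"
    using measurable_sets[OF T, of "{..x}"] by simp
  then have S: "?S \<in> sets borel" by (simp add: vimage_def Collect_conj_eq)
  have "cdf (atom_unif_dist a c) x = measure unif01 (?T -` {..x} \<inter> space unif01)"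
    unfolding cdf_def atom_unif_dist_def by (rule measure_distr) (use T in \<open>auto simp: unif01_def\<close>)
  also have "\<dots> = measure lborel ?S"
    using emeasure_unif01[OF \<open>?T -` {..x} \<in> sets borel\<close>]
    by (simp add: measure_def unif01_def vimage_def)
  also have "\<dots> = atom_unif_cdf a c x"
  proof (rule measure_lborel_squeeze[OF S])
    show "{0..<atom_unif_cdf a c x} \<subseteq> ?S" "?S \<subseteq> {0..atom_unif_cdf a c x}"
      using atom_unif_quantile_galois[OF assms] atom_unif_cdf_bounds[of a c x] assms
      by (force, force)
    show "0 \<le> atom_unif_cdf a c x" using atom_unif_cdf_bounds assms by simp
  qed
  finally show "cdf (atom_unif_dist a c) x = atom_unif_cdf a c x" .
qed

lemma mean_atom_unif_dist:
  assumes "0 \<le> a" "a < 1" "0 \<le> c" "c < 1"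
  shows "(\<integral>x. x \<partial>atom_unif_dist a c) = (1 - a) * (1 + c) / 2"
proof -
  have T: "atom_unif_quantile a c \<in> borel_measurable borel"
    by (rule borel_measurable_atom_unif_quantile[OF assms])
  define k where "k = (1 - c) / (1 - a)"
  have "(\<integral>x. x \<partial>atom_unif_dist a c) = (\<integral>u. atom_unif_quantile a c u \<partial>unif01)"
    unfolding atom_unif_dist_def by (rule integral_distr) (use T in \<open>auto simp: unif01_def\<close>)
  also have "\<dots> = (\<integral>u. indicator {0..1} u *\<^sub>R atom_unif_quantile a c u \<partial>lborel)"
    unfolding unif01_def by (rule integral_density) (use T in auto)
  also have "\<dots> = (\<integral>u. indicator {a..1} u *\<^sub>R (c + (u - a) * k) \<partial>lborel)"
    by (rule Bochner_Integration.integral_cong)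
       (use assms in \<open>auto simp: indicator_def atom_unif_quantile_def k_def\<close>)
  also have "\<dots> = (c * 1 + k * (1 - a)^2 / 2) - (c * a + k * (a - a)^2 / 2)"
  proof (rule integral_FTC_atLeastAtMost)
    show "a \<le> 1" using assms by simp
    show "continuous_on {a..1} (\<lambda>u. c + (u - a) * k)" by (intro continuous_intros)
    fix x assume "a \<le> x" "x \<le> 1"
    show "((\<lambda>u. c * u + k * (u - a)^2 / 2) has_vector_derivative c + (x - a) * k) (at x within {a..1})"
      by (auto intro!: derivative_eq_intros
          simp: has_real_derivative_iff_has_vector_derivative[symmetric] field_simps)
  qed
  also have "\<dots> = (1 - a) * (1 + c) / 2"
    unfolding k_def using assms by (simp add: field_simps power2_eq_square)
  finally show ?thesis .
qed

lemma atom_unif_cdf_in_CDFs_mean: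
  assumes "0 \<le> a" "a < 1" "0 \<le> c" "c < 1"
  shows "atom_unif_cdf a c \<in> CDFs_mean ((1 - a) * (1 + c) / 2)"
proof -
  note dist = real_distribution_atom_unif_dist[OF assms] and cdf_eq = cdf_atom_unif_dist[OF assms]
  have "cdf01 (cdf (atom_unif_dist a c))"
    by (rule cdf01_cdf[OF dist]) (use assms in \<open>auto simp: cdf_eq atom_unif_cdf_def\<close>)
  moreover have "interval_measure (atom_unif_cdf a c) = atom_unif_dist a c"
    using interval_measure_cdf[OF dist] cdf_eq by simp
  ultimately show ?thesis
    unfolding CDFs_mean_def using cdf_eq mean_atom_unif_dist[OF assms] by simp
qed

lemma worst_revenue0_ge_affine:
  assumes H01: "cdf01 H" and p: "0 \<le> p" and xi: "0 \<le> xi" "xi \<le> 1"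
    and above: "\<And>v. 0 \<le> v \<Longrightarrow> v \<le> 1 \<Longrightarrow> \<alpha> - \<beta> * v \<le> 1 - H (p + v)"
  shows "p * (\<alpha> - \<beta> * xi) \<le> worst_revenue0 xi p H"
  unfolding worst_revenue0_def
proof (rule cINF_greatest)
  show "CDFs_mean xi \<noteq> {}" using point_mass_in_CDFs_mean[OF xi] by auto
  fix G assume G: "G \<in> CDFs_mean xi"
  have G01: "cdf01 G" and mean: "(\<integral>x. x \<partial>interval_measure G) = xi"
    using G unfolding CDFs_mean_def by auto
  interpret real_distribution "interval_measure G"
    by (rule real_distribution_interval_measure_cdf01[OF G01])
  have "\<alpha> - \<beta> * xi = (\<integral>v. \<alpha> - \<beta> * v \<partial>interval_measure G)"
    using integrable_interval_measure_cdf01[OF G01] mean prob_space by simp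
  also have "\<dots> \<le> (\<integral>v. 1 - H (p + v) \<partial>interval_measure G)"
  proof (rule integral_mono_AE)
    show "integrable (interval_measure G) (\<lambda>v. \<alpha> - \<beta> * v)"
      using integrable_interval_measure_cdf01[OF G01] by auto
    show "integrable (interval_measure G) (\<lambda>v. 1 - H (p + v))"
      by (rule integrable_const_bound[of _ 1])
         (use cdf01_le_1[OF H01] cdf01_nonneg[OF H01] borel_measurable_cdf01_shift[OF H01] in auto)
    show "AE v in interval_measure G. \<alpha> - \<beta> * v \<le> 1 - H (p + v)"
      using AE_interval_measure_cdf01[OF G01] by eventually_elim (use above in auto)
  qed
  finally show "p * (\<alpha> - \<beta> * xi) \<le> revenue0 p H G"
    unfolding revenue0_def using p by (rule mult_left_mono)
qed

lemma atom_unif_cdf_survival_ge: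
  assumes a: "0 \<le> a" "a < 1" and p: "0 \<le> p" "p \<le> c" "c < 1" and v: "0 \<le> v"
  shows "(1 - a) * (1 - p - v) / (1 - p) \<le> 1 - atom_unif_cdf a c (p + v)"
proof -
  consider "p + v < c" | "c \<le> p + v" "p + v < 1" | "1 \<le> p + v" by linarith
  then show ?thesis
  proof cases
    case 1
    have "(1 - a) * (1 - p - v) \<le> (1 - a) * (1 - p)" using a v by (intro mult_left_mono) auto
    then show ?thesis using 1 p v by (simp add: atom_unif_cdf_def divide_le_eq)
  next
    case 2
    have "1 - atom_unif_cdf a c (p + v) = (1 - a) * (1 - p - v) / (1 - c)"
      using 2 p v by (simp add: atom_unif_cdf_def field_simps)
    moreover have "(1 - a) * (1 - p - v) / (1 - p) \<le> (1 - a) * (1 - p - v) / (1 - c)"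
      using 2 a p by (intro divide_left_mono) auto
    ultimately show ?thesis by simp
  next
    case 3
    then have "(1 - a) * (1 - p - v) / (1 - p) \<le> 0"
      using a p by (intro divide_nonpos_pos mult_nonneg_nonpos) auto
    then show ?thesis using 3 p v by (simp add: atom_unif_cdf_def)
  qed
qed

lemma worst_revenue0_atom_unif_ge:
  assumes a: "0 \<le> a" "a < 1" and p: "0 \<le> p" "p \<le> c" "c < 1" and xi: "0 \<le> xi" "xi \<le> 1"
  shows "p * ((1 - a) * (1 - p - xi) / (1 - p)) \<le> worst_revenue0 xi p (atom_unif_cdf a c)"
proof -
  have H01: "cdf01 (atom_unif_cdf a c)"
    using atom_unif_cdf_in_CDFs_mean[of a c] a p unfolding CDFs_mean_def by auto
  have affine: "(1 - a) * (1 - p - v) / (1 - p) = (1 - a) - (1 - a) / (1 - p) * v" for v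
    using p by (simp add: field_simps)
  have "p * ((1 - a) - (1 - a) / (1 - p) * xi) \<le> worst_revenue0 xi p (atom_unif_cdf a c)"
    by (rule worst_revenue0_ge_affine[OF H01 p(1) xi])
       (use atom_unif_cdf_survival_ge[OF a p] affine in metis)
  then show ?thesis unfolding affine .
qed

section \<open>The revenue rate\<close>

text \<open>At price t the posterior atom_unif_cdf (1 - 2 mu / (1 + t)) t guarantees mu * rev_rate xi t,
  while the slope outside options cap the guarantee of any strategy with price p by
  mu * rev_rate xi q for some q \<ge> p.\<close>

definition rev_rate :: "real \<Rightarrow> real \<Rightarrow> real" where
  "rev_rate xi t = 2 * t * (1 - t - xi) / (1 - t^2)"

lemma sqrt_2xi_bounds:
  fixes xi :: real
  assumes "0 < xi" "xi < 1"
  shows "sqrt (2*xi - xi^2)^2 = 2*xi - xi^2" "0 < sqrt (2*xi - xi^2)" "sqrt (2*xi - xi^2) < 1"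
    "xi < sqrt (2*xi - xi^2)"
proof -
  have "xi^2 < xi" using mult_strict_left_mono[OF assms(2,1)] by (simp add: power2_eq_square)
  moreover have "0 < (1 - xi)^2" using assms by simp
  ultimately have bounds: "xi^2 < 2*xi - xi^2" "2*xi - xi^2 < 1"
    by (simp_all add: power2_diff)
  then show "sqrt (2*xi - xi^2)^2 = 2*xi - xi^2" "0 < sqrt (2*xi - xi^2)"
    using assms by auto
  show "sqrt (2*xi - xi^2) < 1" using bounds by simp
  show "xi < sqrt (2*xi - xi^2)" using bounds assms by (simp add: real_less_rsqrt)
qed

lemma rev_rate_completed_square:
  fixes xi s t :: real
  assumes s: "s^2 = 2*xi - xi^2" "0 < s" and t: "0 \<le> t" "t < 1"
  shows "rev_rate xi t = (1 - s) - ((1 + s) * t - (1 - xi))^2 / ((1 + s) * (1 - t^2))"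
proof -
  have square: "((1 + s) * t - (1 - xi))^2 = (1 + s) * ((1 - s) * (1 - t^2) - 2*t*(1 - t - xi))"
    using s(1) by algebra
  have "((1 + s) * t - (1 - xi))^2 / ((1 + s) * (1 - t^2))
      = ((1 - s) * (1 - t^2) - 2*t*(1 - t - xi)) / (1 - t^2)"
    unfolding square using s(2) by (intro mult_divide_mult_cancel_left) auto
  also have "\<dots> = (1 - s) - rev_rate xi t"
  proof -
    have "t^2 < 1" using t by (simp add: power_less_one_iff)
    then have "1 - t^2 \<noteq> 0" by simp
    then show ?thesis unfolding rev_rate_def by (simp add: diff_divide_distrib)
  qed
  finally show ?thesis by simp
qed

lemma rev_rate_le:
  assumes "s^2 = 2*xi - xi^2" "0 < s" "0 \<le> t" "t < 1"
  shows "rev_rate xi t \<le> 1 - s"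
proof -
  have "0 < 1 - t^2" using assms by (simp add: power_less_one_iff)
  then show ?thesis using rev_rate_completed_square[OF assms] assms by simp
qed

lemma rev_rate_argmax:
  assumes s: "s^2 = 2*xi - xi^2" "0 < s" "s < 1" and xi: "xi < 1" "xi < s"
  shows "rev_rate xi ((1 - s) / (1 - xi)) = 1 - s"
proof -
  have "(1 + s) * (1 - s) = (1 - xi)^2" using s by algebra
  then have "(1 + s) * ((1 - s) / (1 - xi)) - (1 - xi) = 0"
    using xi by (simp add: field_simps power2_eq_square)
  moreover have "0 \<le> (1 - s) / (1 - xi)" "(1 - s) / (1 - xi) < 1" using s xi by auto
  ultimately show ?thesis using rev_rate_completed_square[OF s(1,2)] by simp
qed

lemma rev_rate_antimono:
  assumes s: "s^2 = 2*xi - xi^2" "0 < s" "s < 1" and xi: "xi < 1"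
    and ab: "(1 - s) / (1 - xi) \<le> a" "a \<le> b" "b < 1"
  shows "rev_rate xi b \<le> rev_rate xi a"
proof -
  have "0 \<le> (1 - s) / (1 - xi)" using s xi by simp
  then have a0: "0 \<le> a" using ab by linarith
  have "(1 + s) * (1 - s) = (1 - xi)^2" using s by algebra
  then have "(1 + s) * ((1 - s) / (1 - xi)) = 1 - xi" using xi by (simp add: field_simps power2_eq_square)
  moreover have "(1 + s) * ((1 - s) / (1 - xi)) \<le> (1 + s) * a" using ab s by (intro mult_left_mono) auto
  ultimately have "0 \<le> (1 + s) * a - (1 - xi)" by simp
  moreover have "(1 + s) * a - (1 - xi) \<le> (1 + s) * b - (1 - xi)" using ab s by (simp add: mult_left_mono)
  ultimately have num: "((1 + s) * a - (1 - xi))^2 \<le> ((1 + s) * b - (1 - xi))^2"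
    by (rule power_mono[rotated])
  have den: "0 < (1 + s) * (1 - b^2)" "(1 + s) * (1 - b^2) \<le> (1 + s) * (1 - a^2)"
    using ab a0 s by (auto simp: power_less_one_iff intro!: mult_left_mono power_mono)
  have "((1 + s) * a - (1 - xi))^2 / ((1 + s) * (1 - a^2))
      \<le> ((1 + s) * b - (1 - xi))^2 / ((1 + s) * (1 - b^2))"
    by (rule frac_le[OF _ num den]) simp
  then show ?thesis
    using rev_rate_completed_square[OF s(1,2)] ab a0 by (simp add: order.trans[OF ab(1)])
qed

lemma rev_rate_nonneg:
  assumes "0 \<le> q" "q < 1" "q + xi \<le> 1"
  shows "0 \<le> rev_rate xi q"
proof -
  have "0 < 1 - q^2" using assms by (simp add: power_less_one_iff)
  then show ?thesis unfolding rev_rate_def using assms by simp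
qed

lemma rev_rate_eq_two_point:
  assumes "0 \<le> q" "q < 1"
  shows "(1 + q) / 2 * rev_rate xi q = q * (1 - xi / (1 - q))"
proof -
  have "1 - q^2 = (1 - q) * (1 + q)" by (simp add: algebra_simps power2_eq_square)
  then have "rev_rate xi q = 2 * (q * (1 - q - xi) / (1 - q)) / (1 + q)"
    unfolding rev_rate_def by simp
  then have "(1 + q) / 2 * rev_rate xi q = q * (1 - q - xi) / (1 - q)"
    using assms by simp
  also have "\<dots> = q * (1 - xi / (1 - q))" using assms by (simp add: field_simps)
  finally show ?thesis .
qed

lemma two_point_bound_mono:
  fixes xi p q r :: real
  assumes r: "r^2 = xi" "0 < r" and pq: "0 \<le> p" "p \<le> q" "q \<le> 1 - r"
  shows "p * (1 - xi / (1 - p)) \<le> q * (1 - xi / (1 - q))"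
proof -
  have pos: "r \<le> 1 - q" "1 - q \<le> 1 - p" using pq by auto
  then have "r * r \<le> (1 - p) * (1 - q)" using r by (intro mult_mono) auto
  then have "0 \<le> (1 - p) * (1 - q) - xi" using r by (simp add: power2_eq_square)
  moreover have "q * (1 - xi / (1 - q)) - p * (1 - xi / (1 - p))
      = (q - p) * ((1 - p) * (1 - q) - xi) / ((1 - p) * (1 - q))"
    using pos r(2) by (simp add: field_simps)
  moreover have "0 \<le> (q - p) * ((1 - p) * (1 - q) - xi) / ((1 - p) * (1 - q))"
    using calculation(1) pq pos r by simp
  ultimately show ?thesis by linarith
qed

lemma two_point_bound_le:
  fixes xi p r :: real
  assumes r: "r^2 = xi" "0 < r" and p: "p < 1"
  shows "p * (1 - xi / (1 - p)) \<le> (1 - r)^2"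
proof -
  have "(1 - r)^2 - p * (1 - xi / (1 - p)) = ((1 - p) - r)^2 / (1 - p)"
    using p r by (simp add: field_simps power2_eq_square)
  moreover have "0 \<le> ((1 - p) - r)^2 / (1 - p)" using p by simp
  ultimately show ?thesis by linarith
qed

lemma rev_rate_argmax_le:
  fixes xi r s :: real
  assumes r: "r^2 = xi" "0 < r" "r < 1" and s: "s^2 = 2*xi - xi^2" "0 \<le> s"
  shows "(1 - s) / (1 - xi) \<le> 1 - r"
proof -
  define g where "g = r + r^2 - r^3"
  have "0 \<le> g" unfolding g_def using r
    by (simp add: power2_eq_square power3_eq_cube)
       (metis add_increasing less_eq_real_def mult_le_one mult_left_le mult_nonneg_nonneg)
  moreover have "g^2 - (2*xi - xi^2) = r^2 * ((r - 1)^3 * (r + 1))"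
    unfolding g_def r(1)[symmetric] by algebra
  moreover have "(r - 1)^3 \<le> 0" using r by (simp add: power_le_zero_eq)
  then have "(r - 1)^3 * (r + 1) \<le> 0" using r by (simp add: mult_nonpos_nonneg)
  then have "r^2 * ((r - 1)^3 * (r + 1)) \<le> 0" by (simp add: mult_nonneg_nonpos)
  ultimately have "g^2 \<le> s^2" using s by simp
  then have "g \<le> s" using s(2) by (simp add: power2_le_iff_abs_le)
  moreover have "(1 - r) * (1 - xi) = 1 - g" unfolding g_def using r(1)[symmetric]
    by (simp add: algebra_simps power2_eq_square power3_eq_cube)
  ultimately have "1 - s \<le> (1 - r) * (1 - xi)" by linarith
  moreover have "0 < 1 - xi" using r by (simp add: power_less_one_iff flip: r(1))
  ultimately show ?thesis by (simp add: pos_divide_le_eq)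
qed

lemma rev_rate_ge_shifted:
  fixes xi p y :: real
  assumes p: "0 \<le> p" and y: "0 < y" "xi \<le> y" "y^2 = 2*xi*(p + y)" "p \<le> 1 - y"
  shows "p / (p + y) \<le> rev_rate xi (1 - y)"
proof -
  define q where "q = 1 - y"
  have "p * (y * (2*p + y)) = 2*p*(y - xi)*(p + y)" using y(3) by algebra
  then have "p / (p + y) = 2*p*(y - xi) / (y * (2*p + y))"
    using p y by (simp add: frac_eq_eq)
  also have "\<dots> = (y - xi) / y * (2*p / (2*p + y))" by simp
  also have "\<dots> \<le> (y - xi) / y * (2*q / (2*q + y))"
  proof (rule mult_left_mono)
    have "2*q / (2*q + y) - 2*p / (2*p + y) = 2*y*(q - p) / ((2*q + y) * (2*p + y))"
      using p y unfolding q_def by (simp add: field_simps)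
    moreover have "0 \<le> 2*y*(q - p) / ((2*q + y) * (2*p + y))" using p y unfolding q_def by simp
    ultimately show "2*p / (2*p + y) \<le> 2*q / (2*q + y)" by linarith
    show "0 \<le> (y - xi) / y" using y by simp
  qed
  also have "\<dots> = rev_rate xi (1 - y)"
  proof -
    have "1 - q^2 = y * (2*q + y)" unfolding q_def by (simp add: algebra_simps power2_eq_square)
    then show ?thesis unfolding rev_rate_def q_def[symmetric] by (simp add: q_def)
  qed
  finally show ?thesis .
qed

lemma worst_revenue0_le_rev_rate_at_price:
  assumes H: "H \<in> CDFs_mean mu" and p: "0 \<le> p" "p < 1" and xi: "0 < xi" "p + xi \<le> 1"
    and steep: "(1 - p)^2 \<le> 2 * xi"
  shows "worst_revenue0 xi p H \<le> mu * rev_rate xi p"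
proof -
  define b where "b = 2 * (1 - p - xi) / ((1 - p) * (1 + p))"
  have D: "0 < (1 - p) * (1 + p)" using p by auto
  have "2 * (1 - p - xi) \<le> (1 - p) * (1 + p)"
    using steep by (simp add: algebra_simps power2_eq_square)
  then have b: "0 \<le> b" "b \<le> 1" unfolding b_def using xi D by (auto simp: divide_le_eq)
  have "b * (1 - p)^2 / 2 + (1 - b * (p + (1 - p))) * (1 - p) = (1 - p) - b * ((1 - p) * (1 + p)) / 2"
    by (simp add: field_simps power2_eq_square)
  also have "b * ((1 - p) * (1 + p)) = 2 * (1 - p - xi)" unfolding b_def using D p by simp
  finally have mean: "b * (1 - p)^2 / 2 + (1 - b * (p + (1 - p))) * (1 - p) = xi"
    by (simp add: field_simps)
  have "worst_revenue0 xi p H \<le> p * b * mu"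
    by (rule worst_revenue0_le_slope[OF H p(1) _ _ b(1) _ _ mean]) (use p b in auto)
  also have "p * b * mu = mu * rev_rate xi p"
  proof -
    have "1 - p^2 = (1 - p) * (1 + p)" by (simp add: algebra_simps power2_eq_square)
    then show ?thesis unfolding rev_rate_def b_def by simp
  qed
  finally show ?thesis .
qed

lemma worst_revenue0_le_rev_rate_above_price:
  assumes H: "H \<in> CDFs_mean mu" and mu: "0 \<le> mu" and p: "0 \<le> p" and xi: "0 < xi" "p + xi \<le> 1"
    and flat: "2 * xi \<le> (1 - p)^2"
  shows "\<exists>q. p \<le> q \<and> q < 1 \<and> worst_revenue0 xi p H \<le> mu * rev_rate xi q"
proof -
  define y where "y = xi + sqrt (xi^2 + 2 * xi * p)"
  have "0 \<le> sqrt (xi^2 + 2 * xi * p)" by (rule real_sqrt_ge_zero) (use xi p in simp)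
  then have y: "0 < y" "xi \<le> y" unfolding y_def using xi by linarith+
  have y2: "y^2 = 2 * xi * (p + y)"
    unfolding y_def using xi p by (simp add: power2_eq_square algebra_simps)
  have "xi^2 + 2 * xi * p \<le> (1 - p - xi)^2"
    using flat by (simp add: algebra_simps power2_eq_square)
  then have "sqrt (xi^2 + 2 * xi * p) \<le> sqrt ((1 - p - xi)^2)" by (rule real_sqrt_le_mono)
  also have "\<dots> = 1 - p - xi" using xi by simp
  finally have "sqrt (xi^2 + 2 * xi * p) \<le> 1 - p - xi" .
  then have py: "p + y \<le> 1" unfolding y_def by simp
  have mean: "(1 / (p + y)) * y^2 / 2 + (1 - (1 / (p + y)) * (p + y)) * y = xi"
    using y2 y p by (simp add: field_simps)
  have "worst_revenue0 xi p H \<le> p * (1 / (p + y)) * mu"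
    by (rule worst_revenue0_le_slope[OF H p y(1) py _ _ _ mean]) (use p y in auto)
  also have "\<dots> = mu * (p / (p + y))" by simp
  also have "\<dots> \<le> mu * rev_rate xi (1 - y)"
    by (rule mult_left_mono[OF rev_rate_ge_shifted[OF p y y2] mu]) (use py in simp)
  finally show ?thesis using py y by (intro exI[of _ "1 - y"]) auto
qed

lemma worst_revenue0_le_rev_rate:
  assumes H: "H \<in> CDFs_mean mu" and mu: "0 \<le> mu" and p: "0 \<le> p" and xi: "0 < xi" "p + xi \<le> 1"
  shows "\<exists>q. p \<le> q \<and> q < 1 \<and> worst_revenue0 xi p H \<le> mu * rev_rate xi q"
proof (cases "(1 - p)^2 \<le> 2 * xi")
  case True
  then show ?thesis using worst_revenue0_le_rev_rate_at_price[OF H p _ xi] xi by auto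
next
  case False
  then show ?thesis using worst_revenue0_le_rev_rate_above_price[OF H mu p xi] by simp
qed

lemma worst_revenue0_le_low:
  assumes H: "H \<in> CDFs_mean mu" and mu: "0 \<le> mu" and p: "0 \<le> p" "p \<le> 1"
    and xi: "0 < xi" "xi < 1" and s: "s^2 = 2*xi - xi^2" "0 < s"
  shows "worst_revenue0 xi p H \<le> mu * (1 - s)"
proof (cases "1 \<le> p + xi")
  case True
  then have "worst_revenue0 xi p H \<le> 0" using worst_revenue0_nonpos[OF H p(1)] xi by auto
  also have "0 \<le> mu * (1 - s)" using mu s rev_rate_le[OF s, of 0] by (simp add: rev_rate_def)
  finally show ?thesis .
next
  case False
  then obtain q where q: "p \<le> q" "q < 1" "worst_revenue0 xi p H \<le> mu * rev_rate xi q"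
    using worst_revenue0_le_rev_rate[OF H mu p(1) xi(1)] by auto
  have "mu * rev_rate xi q \<le> mu * (1 - s)"
    using q p by (intro mult_left_mono[OF rev_rate_le[OF s] mu]) auto
  with q(3) show ?thesis by linarith
qed

lemma worst_revenue0_le_mid:
  assumes H: "H \<in> CDFs_mean mu" and p: "0 \<le> p" "p \<le> 1"
    and xi: "0 < xi" "xi < 1" and s: "s^2 = 2*xi - xi^2" "0 < s" "s < 1"
    and r: "r^2 = xi" "0 < r" "r < 1"
    and c: "(1 - s) / (1 - xi) \<le> c" "c \<le> 1 - r" and mu: "mu = (1 + c) / 2"
  shows "worst_revenue0 xi p H \<le> mu * rev_rate xi c"
proof -
  have "0 \<le> (1 - s) / (1 - xi)" using s xi by simp
  then have c01: "0 \<le> c" "c < 1" using c r by linarith+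
  have mu0: "0 \<le> mu" unfolding mu using c01 by simp
  show ?thesis
  proof (cases "1 \<le> p + xi")
    case True
    have "xi \<le> r" using r by (simp add: power2_eq_square flip: r(1))
    then have "0 \<le> rev_rate xi c" using c01 c by (intro rev_rate_nonneg) auto
    moreover have "worst_revenue0 xi p H \<le> 0" using worst_revenue0_nonpos[OF H p(1)] xi True by auto
    ultimately show ?thesis using mu0 by (meson mult_nonneg_nonneg order.trans)
  next
    case False
    then have p1: "p < 1" "p + xi \<le> 1" using xi by auto
    show ?thesis
    proof (cases "p \<le> c")
      case True
      have "worst_revenue0 xi p H \<le> p * (1 - xi / (1 - p))"
        by (rule worst_revenue0_le_two_point[OF H p(1) p1(1)]) (use xi p1 in auto)
      also have "\<dots> \<le> c * (1 - xi / (1 - c))" by (rule two_point_bound_mono[OF r(1,2) p(1) True c(2)])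
      also have "\<dots> = mu * rev_rate xi c" unfolding mu by (rule rev_rate_eq_two_point[OF c01, symmetric])
      finally show ?thesis .
    next
      case False
      obtain q where q: "p \<le> q" "q < 1" "worst_revenue0 xi p H \<le> mu * rev_rate xi q"
        using worst_revenue0_le_rev_rate[OF H mu0 p(1) xi(1) p1(2)] by auto
      have "mu * rev_rate xi q \<le> mu * rev_rate xi c"
        using False q by (intro mult_left_mono[OF rev_rate_antimono[OF s xi(2) c(1)] mu0]) auto
      with q(3) show ?thesis by linarith
    qed
  qed
qed

lemma worst_revenue0_le_high:
  assumes H: "H \<in> CDFs_mean mu" and p: "0 \<le> p" "p \<le> 1"
    and xi: "0 < xi" "xi < 1" and r: "r^2 = xi" "0 < r"
  shows "worst_revenue0 xi p H \<le> (1 - r)^2"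
proof (cases "1 \<le> p + xi")
  case True
  then have "worst_revenue0 xi p H \<le> 0" using worst_revenue0_nonpos[OF H p(1)] xi by auto
  also have "0 \<le> (1 - r)^2" by simp
  finally show ?thesis .
next
  case False
  then have p1: "p < 1" "p + xi \<le> 1" using xi by auto
  have "worst_revenue0 xi p H \<le> p * (1 - xi / (1 - p))"
    by (rule worst_revenue0_le_two_point[OF H p(1) p1(1)]) (use xi p1 in auto)
  also have "\<dots> \<le> (1 - r)^2" by (rule two_point_bound_le[OF r p1(1)])
  finally show ?thesis .
qed

section \<open>The three regimes\<close>

lemma robustly_optimal0_intro:
  assumes "p \<in> {0..1}" "H \<in> CDFs_mean mu" "R \<le> worst_revenue0 xi p H"
    "\<And>p' H'. p' \<in> {0..1} \<Longrightarrow> H' \<in> CDFs_mean mu \<Longrightarrow> worst_revenue0 xi p' H' \<le> R"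
  shows "robustly_optimal0 mu xi p H"
  unfolding robustly_optimal0_def using assms by (meson order_trans)

lemma mu_low_eq:
  assumes "xi < 1"
  shows "2 * mu_low xi = 1 + (1 - sqrt (2*xi - xi^2)) / (1 - xi)"
  unfolding mu_low_def using assms by (simp add: field_simps)

lemma HU0_not_high:
  assumes "\<not> mu_high xi < mu" "0 \<le> p0_star mu xi" "p0_star mu xi < 1"
  shows "HU0 mu xi = atom_unif_cdf (1 - 2 * mu / (1 + p0_star mu xi)) (p0_star mu xi)"
proof
  fix w
  let ?p = "p0_star mu xi"
  have affine: "1 - m / (B * A) * u = 1 - m / A + m / A * (B - u) / B"
    if "A \<noteq> 0" "B \<noteq> 0" for m A B u :: real
    using that by (simp add: field_simps)
  have "1 - 2 * mu / ((1 - ?p) * (1 + ?p)) * (1 - w)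
      = 1 - 2 * mu / (1 + ?p) + 2 * mu / (1 + ?p) * (w - ?p) / (1 - ?p)"
    using affine[of "1 + ?p" "1 - ?p" "2 * mu" "1 - w"] assms by simp
  moreover have "1 - ?p^2 = (1 - ?p) * (1 + ?p)" by (simp add: algebra_simps power2_eq_square)
  ultimately show "HU0 mu xi w = atom_unif_cdf (1 - 2 * mu / (1 + ?p)) ?p w"
    using assms unfolding HU0_def atom_unif_cdf_def Let_def by auto
qed

lemma HU0_high:
  assumes "mu_high xi < mu" "0 \<le> 2 * mu - 1"
  shows "HU0 mu xi = atom_unif_cdf 0 (2 * mu - 1)"
  using assms unfolding HU0_def atom_unif_cdf_def by (auto simp: fun_eq_iff)

lemma robustly_optimal0_uniform_info:
  assumes "\<not> mu_high xi < mu" and p: "0 \<le> p0_star mu xi" "p0_star mu xi < 1"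
    and mu: "0 < mu" "2 * mu \<le> 1 + p0_star mu xi" and xi: "0 \<le> xi" "xi \<le> 1"
    and upper: "\<And>p' H'. p' \<in> {0..1} \<Longrightarrow> H' \<in> CDFs_mean mu
                  \<Longrightarrow> worst_revenue0 xi p' H' \<le> mu * rev_rate xi (p0_star mu xi)"
  shows "robustly_optimal0 mu xi (p0_star mu xi) (HU0 mu xi)"
proof -
  let ?p = "p0_star mu xi" and ?a = "1 - 2 * mu / (1 + p0_star mu xi)"
  have a: "0 \<le> ?a" "?a < 1" using p mu by (auto simp: field_simps)
  have "atom_unif_cdf ?a ?p \<in> CDFs_mean ((1 - ?a) * (1 + ?p) / 2)"
    by (rule atom_unif_cdf_in_CDFs_mean[OF a p])
  moreover have "(1 - ?a) * (1 + ?p) / 2 = mu" using p by simp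
  moreover have "?p * ((1 - ?a) * (1 - ?p - xi) / (1 - ?p)) = mu * rev_rate xi ?p"
  proof -
    have "1 - ?p^2 = (1 - ?p) * (1 + ?p)" by (simp add: algebra_simps power2_eq_square)
    then show ?thesis unfolding rev_rate_def by (simp add: ac_simps)
  qed
  ultimately show ?thesis
    unfolding HU0_not_high[OF assms(1) p]
    using worst_revenue0_atom_unif_ge[OF a p(1) order.refl p(2) xi] p upper
    by (intro robustly_optimal0_intro) auto
qed

lemma robustly_optimal0_low:
  assumes mu: "0 < mu" "mu \<le> mu_low xi" and xi: "0 < xi" "xi < 1"
  shows "robustly_optimal0 mu xi (p0_star mu xi) (HU0 mu xi)"
proof -
  define s where "s = sqrt (2*xi - xi^2)"
  note s = sqrt_2xi_bounds[OF xi, folded s_def]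
  have r: "sqrt xi ^ 2 = xi" "0 < sqrt xi" "sqrt xi < 1" using xi by auto
  have p: "p0_star mu xi = (1 - s) / (1 - xi)" using mu unfolding p0_star_def s_def by simp
  have "(1 - s) / (1 - xi) \<le> 1 - sqrt xi" by (rule rev_rate_argmax_le[OF r s(1)]) (use s in simp)
  show ?thesis
  proof (rule robustly_optimal0_uniform_info)
    show "\<not> mu_high xi < mu"
      using \<open>(1 - s) / (1 - xi) \<le> 1 - sqrt xi\<close> mu mu_low_eq[OF xi(2)]
      unfolding mu_high_def s_def by simp
    show "0 \<le> p0_star mu xi" "p0_star mu xi < 1" using s xi unfolding p by auto
    show "2 * mu \<le> 1 + p0_star mu xi" using mu mu_low_eq[OF xi(2)] unfolding p s_def by simp
    show "worst_revenue0 xi p' H' \<le> mu * rev_rate xi (p0_star mu xi)"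
      if "p' \<in> {0..1}" "H' \<in> CDFs_mean mu" for p' H'
      using worst_revenue0_le_low[OF that(2) _ _ _ xi s(1,2)] that mu
        rev_rate_argmax[OF s(1-3) xi(2) s(4)] unfolding p by simp
  qed (use mu xi in auto)
qed

lemma robustly_optimal0_mid:
  assumes mu: "mu_low xi < mu" "mu \<le> mu_high xi" and xi: "0 < xi" "xi < 1"
  shows "robustly_optimal0 mu xi (p0_star mu xi) (HU0 mu xi)"
proof -
  define s where "s = sqrt (2*xi - xi^2)"
  note s = sqrt_2xi_bounds[OF xi, folded s_def]
  have r: "sqrt xi ^ 2 = xi" "0 < sqrt xi" "sqrt xi < 1" using xi by auto
  have p: "p0_star mu xi = 2 * mu - 1" using mu unfolding p0_star_def by simp
  have c: "(1 - s) / (1 - xi) \<le> 2 * mu - 1" "2 * mu - 1 \<le> 1 - sqrt xi"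
    using mu mu_low_eq[OF xi(2)] unfolding mu_high_def s_def by simp_all
  have "0 \<le> (1 - s) / (1 - xi)" using s xi by simp
  show ?thesis
  proof (rule robustly_optimal0_uniform_info)
    show "0 \<le> p0_star mu xi" "p0_star mu xi < 1" "0 < mu"
      using c r(2) \<open>0 \<le> (1 - s) / (1 - xi)\<close> unfolding p by linarith+
    show "worst_revenue0 xi p' H' \<le> mu * rev_rate xi (p0_star mu xi)"
      if "p' \<in> {0..1}" "H' \<in> CDFs_mean mu" for p' H'
      using worst_revenue0_le_mid[OF that(2) _ _ xi s(1-3) r c] that unfolding p by simp
  qed (use mu xi p in auto)
qed

lemma robustly_optimal0_high:
  assumes mu: "mu_high xi < mu" "mu < 1" and xi: "0 < xi" "xi < 1"
  shows "robustly_optimal0 mu xi (p0_star mu xi) (HU0 mu xi)"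
proof -
  define r where "r = sqrt xi"
  have r: "r^2 = xi" "0 < r" "r < 1" unfolding r_def using xi by auto
  define s where "s = sqrt (2*xi - xi^2)"
  note s = sqrt_2xi_bounds[OF xi, folded s_def]
  have "(1 - s) / (1 - xi) \<le> 1 - r" by (rule rev_rate_argmax_le[OF r s(1)]) (use s in simp)
  then have p: "p0_star mu xi = 1 - r"
    using mu mu_low_eq[OF xi(2)] unfolding p0_star_def mu_high_def r_def s_def by auto
  have c: "1 - r < 2 * mu - 1" "2 * mu - 1 < 1" using mu unfolding mu_high_def r_def by auto
  have HU: "HU0 mu xi = atom_unif_cdf 0 (2 * mu - 1)"
    by (rule HU0_high[OF mu(1)]) (use c r in linarith)
  show ?thesis unfolding p HU
  proof (rule robustly_optimal0_intro)
    show "1 - r \<in> {0..1}" using r by simp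
    show "atom_unif_cdf 0 (2 * mu - 1) \<in> CDFs_mean mu"
      using atom_unif_cdf_in_CDFs_mean[of 0 "2 * mu - 1"] c r by simp
    have "(1 - r) * ((1 - 0) * (1 - (1 - r) - xi) / (1 - (1 - r)))
        \<le> worst_revenue0 xi (1 - r) (atom_unif_cdf 0 (2 * mu - 1))"
      by (rule worst_revenue0_atom_unif_ge) (use c r xi in auto)
    moreover have "(1 - r) * ((1 - 0) * (1 - (1 - r) - xi) / (1 - (1 - r))) = (1 - r)^2"
      using r by (simp add: field_simps power2_eq_square)
    ultimately show "(1 - r)^2 \<le> worst_revenue0 xi (1 - r) (atom_unif_cdf 0 (2 * mu - 1))"
      by simp
    show "worst_revenue0 xi p' H' \<le> (1 - r)^2" if "p' \<in> {0..1}" "H' \<in> CDFs_mean mu" for p' H'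
      using worst_revenue0_le_high[OF _ _ _ xi r(1,2)] that by auto
  qed
qed

theorem proposition2:
  fixes mu xi :: real
  assumes "0 < mu" "mu < 1" "0 < xi" "xi < 1"
  shows "robustly_optimal0 mu xi (p0_star mu xi) (HU0 mu xi)"
proof -
  consider "mu \<le> mu_low xi" | "mu_low xi < mu" "mu \<le> mu_high xi" | "mu_high xi < mu" by linarith
  then show ?thesis
    by cases (use assms robustly_optimal0_low robustly_optimal0_mid robustly_optimal0_high in auto)
qed

end
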